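(* Let $X$ be a nonempty set and $d:X\times X\to[0,\infty)$ a triangular symmetric on $X$. Let $(x_n;n\ge 0)$ be a sequence in $X$ which is $0d$-semi-Cauchy but not $0d$-Cauchy, and let $Q$ be a denumerable subset of $(0,\infty)$. Then there exist $\varepsilon\in(0,\infty)\setminus Q$, an index $j(\varepsilon)\in\mathbb{N}$, and two sequences of natural numbers $(m(j);j\ge 0)$, $(n(j);j\ge 0)$ such that: (i) $j\le m(j)<n(j)$ and $d(x_{m(j)},x_{n(j)})\ge\varepsilon$ for all $j\ge 0$; (ii) $n(j)-m(j)\ge 2$ and $d(x_{m(j)},x_{n(j)-1})<\varepsilon$ for all $j\ge j(\varepsilon)$; (iii) $\lim_{j\to\infty} d(x_{m(j)+p},x_{n(j)+q})=\varepsilon$ for all $p,q\in\{0,1\}$.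
   Context: A symmetric on $X$ is a map $d:X\times X\to[0,\infty)$ with $d(x,y)=d(y,x)$ for all $x,y\in X$. It is triangular if $d(x,z)\le d(x,y)+d(y,z)$ for all $x,y,z\in X$. A sequence $(x_n)$ in $X$ is $0d$-Cauchy if for every $\varepsilon>0$ there is $j$ such that $j\le m<n$ implies $d(x_m,x_n)<\varepsilon$; it is $0d$-semi-Cauchy if $d(x_n,x_{n+1})\to 0$ as $n\to\infty$. "Denumerable" means countable. *)

theory Defs
  imports "HOL-Analysis.Analysis"
begin

definition symmetric_on :: "'a set \<Rightarrow> ('a \<Rightarrow> 'a \<Rightarrow> real) \<Rightarrow> bool" where
  "symmetric_on X d \<longleftrightarrow> (\<forall>x\<in>X. \<forall>y\<in>X. d x y \<ge> 0 \<and> d x y = d y x)"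

definition triangular_on :: "'a set \<Rightarrow> ('a \<Rightarrow> 'a \<Rightarrow> real) \<Rightarrow> bool" where
  "triangular_on X d \<longleftrightarrow> (\<forall>x\<in>X. \<forall>y\<in>X. \<forall>z\<in>X. d x z \<le> d x y + d y z)"

definition zero_d_Cauchy :: "('a \<Rightarrow> 'a \<Rightarrow> real) \<Rightarrow> (nat \<Rightarrow> 'a) \<Rightarrow> bool" where
  "zero_d_Cauchy d x \<longleftrightarrow> (\<forall>\<epsilon>>0. \<exists>j. \<forall>m n. j \<le> m \<and> m < n \<longrightarrow> d (x m) (x n) < \<epsilon>)"

definition zero_d_semi_Cauchy :: "('a \<Rightarrow> 'a \<Rightarrow> real) \<Rightarrow> (nat \<Rightarrow> 'a) \<Rightarrow> bool" where
  "zero_d_semi_Cauchy d x \<longleftrightarrow> ((\<lambda>n. d (x n) (x (Suc n))) \<longlonglongrightarrow> 0)"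

end

theory Submission
  imports Defs
begin

text \<open>Since the sequence is not Cauchy, some \<open>e\<^sub>0 > 0\<close> is exceeded by pairs of arbitrarily late
  indices; among the uncountably many \<open>\<epsilon> \<in> (0, e\<^sub>0)\<close> choose one outside \<open>Q\<close>. For every \<open>j\<close> take
  some \<open>m(j) \<ge> j\<close> admitting a later exceedance and let \<open>n(j)\<close> be the first one. Minimality
  gives \<open>d(x\<^sub>m, x\<^sub>n\<^sub>-\<^sub>1) < \<epsilon>\<close>, so \<open>\<epsilon> \<le> d(x\<^sub>m, x\<^sub>n) \<le> \<epsilon> + d(x\<^sub>n\<^sub>-\<^sub>1, x\<^sub>n)\<close>, and the steps
  \<open>d(x\<^sub>k, x\<^sub>k\<^sub>+\<^sub>1) \<rightarrow> 0\<close> squeeze \<open>d(x\<^sub>m, x\<^sub>n)\<close> to \<open>\<epsilon>\<close>; shifting either index by one changes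
  the distance by at most one step.\<close>

lemma LIMSEQ_compose_ge_index:
  fixes s :: "nat \<Rightarrow> 'b::topological_space"
  assumes "s \<longlonglongrightarrow> L" and "\<And>j. j \<le> g j"
  shows "(\<lambda>j. s (g j)) \<longlonglongrightarrow> L"
proof -
  have "filterlim g at_top sequentially"
    by (rule filterlim_at_top_mono[OF filterlim_ident]) (use assms(2) in auto)
  from filterlim_compose[OF assms(1) this] show ?thesis .
qed

lemma countable_avoiding_interval:
  fixes Q :: "real set"
  assumes "countable Q" and "a < b"
  obtains \<epsilon> where "\<epsilon> \<in> {a<..<b}" and "\<epsilon> \<notin> Q"
proof -
  have "\<not> {a<..<b} \<subseteq> Q"
    using assms countable_subset uncountable_open_interval by blast
  then show ?thesis using that by blast
qed

lemma obtain_first_witness_indices: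
  fixes P :: "nat \<Rightarrow> nat \<Rightarrow> bool"
  assumes "\<And>j. \<exists>m n. j \<le> m \<and> m < n \<and> P m n"
  obtains M N :: "nat \<Rightarrow> nat"
  where "\<And>j. j \<le> M j" "\<And>j. M j < N j" "\<And>j. P (M j) (N j)"
    and "\<And>j k. M j < k \<Longrightarrow> k < N j \<Longrightarrow> \<not> P (M j) k"
proof -
  obtain M where M: "\<And>j. j \<le> M j \<and> (\<exists>n. M j < n \<and> P (M j) n)"
    using assms by metis
  define N where "N j = (LEAST n. M j < n \<and> P (M j) n)" for j
  have "M j < N j \<and> P (M j) (N j)" for j
    unfolding N_def by (rule LeastI_ex) (use M in blast)
  moreover have "\<not> P (M j) k" if "M j < k" "k < N j" for j k
    using not_less_Least[of k "\<lambda>n. M j < n \<and> P (M j) n"] that unfolding N_def by blast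
  ultimately show ?thesis using that M by blast
qed

lemma not_zero_d_Cauchy_obtain:
  assumes "\<not> zero_d_Cauchy d x"
  obtains e where "e > 0" and "\<And>j. \<exists>m n. j \<le> m \<and> m < n \<and> e \<le> d (x m) (x n)"
  using assms unfolding zero_d_Cauchy_def by (auto simp: not_less)

lemma symmetric_triangular_abs_diff_le:
  assumes "symmetric_on X d" "triangular_on X d" "a \<in> X" "b \<in> X" "c \<in> X"
  shows "\<bar>d a c - d b c\<bar> \<le> d a b"
proof -
  have "d a c \<le> d a b + d b c" "d b c \<le> d b a + d a c"
    using assms(2-5) unfolding triangular_on_def by blast+
  moreover have "d b a = d a b" using assms(1,3,4) unfolding symmetric_on_def by auto
  ultimately show ?thesis by linarith
qed

lemma index_shift_dist_le:
  assumes "symmetric_on X d" "triangular_on X d" "\<forall>n. x n \<in> X" "r \<in> {0, 1}" "y \<in> X"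
  shows "\<bar>d (x (k + r)) y - d (x k) y\<bar> \<le> d (x k) (x (Suc k))"
proof (cases "r = 0")
  case True
  moreover have "0 \<le> d (x k) (x (Suc k))" using assms(1,3) unfolding symmetric_on_def by blast
  ultimately show ?thesis by simp
next
  case False
  with assms(4) have "k + r = Suc k" by simp
  moreover have "d (x (Suc k)) (x k) = d (x k) (x (Suc k))"
    using assms(1,3) unfolding symmetric_on_def by blast
  ultimately show ?thesis
    using symmetric_triangular_abs_diff_le[OF assms(1,2), of "x (Suc k)" "x k" y] assms(3,5)
    by simp
qed

lemma shifted_pair_dist_le:
  assumes "symmetric_on X d" "triangular_on X d" "\<forall>n. x n \<in> X" "p \<in> {0, 1}" "q \<in> {0, 1}"
  shows "\<bar>d (x (m + p)) (x (n + q)) - d (x m) (x n)\<bar>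
           \<le> d (x m) (x (Suc m)) + d (x n) (x (Suc n))"
proof -
  have "d (x m) (x (n + q)) = d (x (n + q)) (x m)" "d (x m) (x n) = d (x n) (x m)"
    using assms(1,3) unfolding symmetric_on_def by auto
  then show ?thesis
    using index_shift_dist_le[OF assms(1-4), where k = m and y = "x (n + q)"]
      index_shift_dist_le[OF assms(1-3,5), where k = n and y = "x m"] assms(3)
    by simp
qed

lemma first_exceedance_dist_tendsto:
  assumes "triangular_on X d" "\<forall>n. x n \<in> X" "zero_d_semi_Cauchy d x"
    and "\<And>j. j \<le> M j" "\<And>j. M j < N j" "\<And>j. \<epsilon> \<le> d (x (M j)) (x (N j))"
    and "eventually (\<lambda>j. d (x (M j)) (x (N j - 1)) < \<epsilon>) sequentially"
  shows "(\<lambda>j. d (x (M j)) (x (N j))) \<longlonglongrightarrow> \<epsilon>"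
proof (rule tendsto_sandwich[OF always_eventually[OF allI[OF assms(6)]]])
  define s where "s k = d (x k) (x (Suc k))" for k
  have bound: "d (x (M j)) (x (N j)) \<le> d (x (M j)) (x (N j - 1)) + s (N j - 1)" for j
  proof -
    have "Suc (N j - 1) = N j" using assms(5)[of j] by simp
    then show ?thesis using assms(1,2) unfolding triangular_on_def s_def by metis
  qed
  show "eventually (\<lambda>j. d (x (M j)) (x (N j)) \<le> \<epsilon> + s (N j - 1)) sequentially"
  proof (rule eventually_mono[OF assms(7)])
    show "d (x (M j)) (x (N j)) \<le> \<epsilon> + s (N j - 1)" if "d (x (M j)) (x (N j - 1)) < \<epsilon>" for j
      using bound[of j] that by linarith
  qed
  have "(\<lambda>j. s (N j - 1)) \<longlonglongrightarrow> 0"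
  proof (rule LIMSEQ_compose_ge_index)
    show "s \<longlonglongrightarrow> 0" using assms(3) unfolding zero_d_semi_Cauchy_def s_def .
    show "j \<le> N j - 1" for j using assms(4,5)[of j] by linarith
  qed
  from tendsto_add[OF tendsto_const this] show "(\<lambda>j. \<epsilon> + s (N j - 1)) \<longlonglongrightarrow> \<epsilon>"
    by simp
qed simp

lemma shifted_pair_dist_tendsto:
  assumes "symmetric_on X d" "triangular_on X d" "\<forall>n. x n \<in> X" "zero_d_semi_Cauchy d x"
    and "\<And>j. j \<le> M j" "\<And>j. j \<le> N j" "(\<lambda>j. d (x (M j)) (x (N j))) \<longlonglongrightarrow> \<epsilon>"
    and "p \<in> {0, 1}" "q \<in> {0, 1}"
  shows "(\<lambda>j. d (x (M j + p)) (x (N j + q))) \<longlonglongrightarrow> \<epsilon>"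
proof -
  define s where "s k = d (x k) (x (Suc k))" for k
  have "s \<longlonglongrightarrow> 0" using assms(4) unfolding zero_d_semi_Cauchy_def s_def .
  from tendsto_add[OF LIMSEQ_compose_ge_index[OF this assms(5)] LIMSEQ_compose_ge_index[OF this assms(6)]]
  have steps: "(\<lambda>j. s (M j) + s (N j)) \<longlonglongrightarrow> 0" by simp
  have "norm (d (x (M j + p)) (x (N j + q)) - d (x (M j)) (x (N j))) \<le> s (M j) + s (N j)" for j
    using shifted_pair_dist_le[OF assms(1-3,8,9)] unfolding s_def real_norm_def .
  from Lim_null_comparison[OF always_eventually[OF allI[OF this]] steps]
  show ?thesis by (rule Lim_transform[OF assms(7)])
qed

theorem lemma1:
  fixes X :: "'a set" and d :: "'a \<Rightarrow> 'a \<Rightarrow> real" and x :: "nat \<Rightarrow> 'a" and Q :: "real set"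
  assumes "X \<noteq> {}"
    and "symmetric_on X d" and "triangular_on X d"
    and "\<forall>n. x n \<in> X"
    and "zero_d_semi_Cauchy d x" and "\<not> zero_d_Cauchy d x"
    and "countable Q" and "Q \<subseteq> {0<..}"
  shows "\<exists>\<epsilon> j\<epsilon> (m :: nat \<Rightarrow> nat) (n :: nat \<Rightarrow> nat).
           \<epsilon> \<in> {0<..} - Q \<and>
           (\<forall>j. j \<le> m j \<and> m j < n j \<and> d (x (m j)) (x (n j)) \<ge> \<epsilon>) \<and>
           (\<forall>j\<ge>j\<epsilon>. n j - m j \<ge> 2 \<and> d (x (m j)) (x (n j - 1)) < \<epsilon>) \<and>
           (\<forall>p\<in>{0,1}. \<forall>q\<in>{0,1}. (\<lambda>j. d (x (m j + p)) (x (n j + q))) \<longlonglongrightarrow> \<epsilon>)"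
proof -
  obtain e0 where "e0 > 0" and e0: "\<And>j. \<exists>m n. j \<le> m \<and> m < n \<and> e0 \<le> d (x m) (x n)"
    using not_zero_d_Cauchy_obtain[OF assms(6)] by blast
  obtain \<epsilon> where \<epsilon>: "\<epsilon> \<in> {0<..<e0}" "\<epsilon> \<notin> Q"
    using countable_avoiding_interval[OF assms(7) \<open>e0 > 0\<close>] by blast
  have "\<exists>m n. j \<le> m \<and> m < n \<and> \<epsilon> \<le> d (x m) (x n)" for j
    using e0[of j] \<epsilon>(1) by force
  then obtain M N where M: "\<And>j. j \<le> M j" and N: "\<And>j. M j < N j" "\<And>j. \<epsilon> \<le> d (x (M j)) (x (N j))"
    and first: "\<And>j k. M j < k \<Longrightarrow> k < N j \<Longrightarrow> d (x (M j)) (x k) < \<epsilon>"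
    by (rule obtain_first_witness_indices) (auto simp: not_le)
  obtain J where J: "\<And>k. J \<le> k \<Longrightarrow> d (x k) (x (Suc k)) < \<epsilon>"
    using order_tendstoD(2)[OF assms(5)[unfolded zero_d_semi_Cauchy_def], of \<epsilon>] \<epsilon>(1)
    by (auto simp: eventually_sequentially)
  have gap: "N j - M j \<ge> 2 \<and> d (x (M j)) (x (N j - 1)) < \<epsilon>" if "J \<le> j" for j
  proof -
    have "N j \<noteq> Suc (M j)"
      using J[of "M j"] M[of j] N(2)[of j] that by auto
    then show ?thesis using N(1)[of j] first[of j "N j - 1"] by simp
  qed
  have dist_lim: "(\<lambda>j. d (x (M j)) (x (N j))) \<longlonglongrightarrow> \<epsilon>"
    using gap by (intro first_exceedance_dist_tendsto[OF assms(3-5) M N]) (auto simp: eventually_sequentially)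
  have N_ge: "j \<le> N j" for j using M[of j] N(1)[of j] by linarith
  have "(\<lambda>j. d (x (M j + p)) (x (N j + q))) \<longlonglongrightarrow> \<epsilon>"
    if "p \<in> {0, 1}" "q \<in> {0, 1}" for p q
    using shifted_pair_dist_tendsto[OF assms(2-5) M N_ge dist_lim that] .
  with \<epsilon> M N gap show ?thesis
    by (intro exI[of _ \<epsilon>] exI[of _ J] exI[of _ M] exI[of _ N]) auto
qed

end
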